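(* Let $Y$ be a Banach space and $K\subset Y$ a closed convex normal cone. Let $\alpha:\mathbb{R}_+\to\mathbb{R}_+$ be nondecreasing with $\lim_{t\to0^+}\alpha(t)/t=0$, and let $k_0\in K$. Let $\Phi:(0,\infty)\to Y$ satisfy: (i) $\Phi(t)\in K$ for all $t>0$; (ii) $\Phi(t)-\Phi(t_1)+\frac{\alpha(t_1)}{t_1}k_0\in K$ whenever $0<t_1<t$; (iii) $\Phi(t)$ converges weakly to $0$ as $t\to0^+$. Then $\|\Phi(t)\|\to0$ as $t\to0^+$.
   Context: A cone $K$ in a normed space $Y$ is normal if there is a constant $c>0$ such that $0\le_K x\le_K y$ implies $\|x\|\le c\|y\|$, where $x\le_K y$ means $y-x\in K$. *)

theory Defs
  imports "HOL-Analysis.Analysis"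
begin

text \<open>Cone order: x \<le>_K y iff y - x \<in> K.  K is normal if there is c > 0 with
  0 \<le>_K x \<le>_K y implying norm x \<le> c * norm y.\<close>
definition normal_cone :: "'a::real_normed_vector set \<Rightarrow> bool" where
  "normal_cone K \<longleftrightarrow> (\<exists>c>0. \<forall>x y. x - 0 \<in> K \<longrightarrow> y - x \<in> K \<longrightarrow> norm x \<le> c * norm y)"

definition weak_tendsto :: "('b \<Rightarrow> 'a::real_normed_vector) \<Rightarrow> 'a \<Rightarrow> 'b filter \<Rightarrow> bool" where
  "weak_tendsto x l F \<longleftrightarrow> (\<forall>f::'a \<Rightarrow> real. bounded_linear f \<longrightarrow> ((\<lambda>t. f (x t)) \<longlongrightarrow> f l) F)"

end

(*
  Mazur's theorem, proved here from the algebraic Hahn-Banach theorem, makes the weak limit 0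
  a norm limit of convex combinations y of values Phi t, and each such combination involves
  only times t >= m for some m > 0. For 0 < s < m, hypothesis (ii) bounds Phi s above by
  Phi t + (alpha s / s) k0 in the cone order for each of these t, hence by
  y + (alpha s / s) k0 since K is convex. As Phi s >= 0, normality of K gives
  norm (Phi s) <= c (norm y + norm ((alpha s / s) k0)), which is small.
*)
theory Submission
  imports Defs
begin

lemma sublinear_zero:
  fixes p :: "'a::real_vector \<Rightarrow> real"
  assumes hom: "\<And>c x. c > 0 \<Longrightarrow> p (c *\<^sub>R x) = c * p x"
  shows "p 0 = 0"
  using hom[of 2 0] by simp

lemma dominated_subspace_single_valued:
  fixes p :: "'a::real_vector \<Rightarrow> real"
  assumes "p 0 = 0" and G: "subspace G" and dom: "\<forall>(x, y)\<in>G. y \<le> p x"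
    and "(x, y) \<in> G" and "(x, y') \<in> G"
  shows "y = y'"
proof -
  have "(x, y) - (x, y') \<in> G" "(x, y') - (x, y) \<in> G"
    using subspace_diff[OF G] assms(4,5) by blast+
  then have "(0, y - y') \<in> G" "(0, y' - y) \<in> G"
    by simp_all
  then have "y - y' \<le> 0" "y' - y \<le> 0"
    using dom \<open>p 0 = 0\<close> by (metis (no_types, lifting) case_prodD)+
  then show ?thesis
    by simp
qed

lemma sublinear_extension_value:
  fixes p :: "'a::real_vector \<Rightarrow> real"
  assumes sub: "\<And>x y. p (x + y) \<le> p x + p y"
    and G: "subspace G" and dom: "\<forall>(x, y)\<in>G. y \<le> p x"
  obtains c where "\<And>x y. (x, y) \<in> G \<Longrightarrow> y - p (x - z) \<le> c"
    and "\<And>x y. (x, y) \<in> G \<Longrightarrow> c \<le> p (x + z) - y"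
proof -
  have key: "y - p (x - z) \<le> p (x' + z) - y'" if "(x, y) \<in> G" "(x', y') \<in> G" for x y x' y'
  proof -
    have "y + y' \<le> p (x + x')"
      using dom subspace_add[OF G that] by auto
    also have "\<dots> \<le> p (x - z) + p (x' + z)"
      using sub[of "x - z" "x' + z"] by simp
    finally show ?thesis by simp
  qed
  define L where "L = {y - p (x - z) | x y. (x, y) \<in> G}"
  have "(0, 0) \<in> G"
    using subspace_0[OF G] by (simp add: zero_prod_def)
  then have "L \<noteq> {}" and "bdd_above L"
    unfolding L_def bdd_above_def using key by blast+
  show ?thesis
  proof
    show "y - p (x - z) \<le> Sup L" if "(x, y) \<in> G" for x y
      using that \<open>bdd_above L\<close> by (intro cSup_upper) (auto simp: L_def)
    show "Sup L \<le> p (x + z) - y" if "(x, y) \<in> G" for x y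
      using \<open>L \<noteq> {}\<close> by (intro cSup_least) (auto simp: L_def intro: key that)
  qed
qed

lemma sublinear_extension_step:
  fixes p :: "'a::real_vector \<Rightarrow> real"
  assumes sub: "\<And>x y. p (x + y) \<le> p x + p y"
    and hom: "\<And>c x. c > 0 \<Longrightarrow> p (c *\<^sub>R x) = c * p x"
    and G: "subspace G" and dom: "\<forall>(x, y)\<in>G. y \<le> p x"
  obtains c where "\<And>x y t. (x, y) \<in> G \<Longrightarrow> y + t * c \<le> p (x + t *\<^sub>R z)"
proof -
  obtain c where below: "\<And>x y. (x, y) \<in> G \<Longrightarrow> y - p (x - z) \<le> c"
    and above: "\<And>x y. (x, y) \<in> G \<Longrightarrow> c \<le> p (x + z) - y"
    using sublinear_extension_value[OF sub G dom] by metis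
  have "y + t * c \<le> p (x + t *\<^sub>R z)" if xy: "(x, y) \<in> G" for x y t
  proof (cases t "0::real" rule: linorder_cases)
    case less
    have "(x /\<^sub>R (- t), y / (- t)) \<in> G"
      using subspace_scale[OF G xy, of "inverse (- t)"] by (simp add: divide_inverse_commute)
    then have "y / (- t) - p (x /\<^sub>R (- t) - z) \<le> c"
      by (rule below)
    moreover have "p (x + t *\<^sub>R z) = (- t) * p (x /\<^sub>R (- t) - z)"
      using hom[of "- t" "x /\<^sub>R (- t) - z"] less by (simp add: algebra_simps)
    ultimately show ?thesis
      using less by (simp add: field_simps)
  next
    case equal
    then show ?thesis using dom xy by auto
  next
    case greater
    have "(x /\<^sub>R t, y / t) \<in> G"
      using subspace_scale[OF G xy, of "inverse t"] by (simp add: divide_inverse_commute)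
    then have "c \<le> p (x /\<^sub>R t + z) - y / t"
      by (rule above)
    moreover have "p (x + t *\<^sub>R z) = t * p (x /\<^sub>R t + z)"
      using hom[of t "x /\<^sub>R t + z"] greater by (simp add: algebra_simps)
    ultimately show ?thesis
      using greater by (simp add: field_simps)
  qed
  then show ?thesis using that by blast
qed

lemma dominated_subspace_extend:
  fixes p :: "'a::real_vector \<Rightarrow> real"
  assumes sub: "\<And>x y. p (x + y) \<le> p x + p y"
    and hom: "\<And>c x. c > 0 \<Longrightarrow> p (c *\<^sub>R x) = c * p x"
    and G: "subspace G" and dom: "\<forall>(x, y)\<in>G. y \<le> p x" and z: "\<forall>y. (z, y) \<notin> G"
  shows "\<exists>G'. subspace G' \<and> (\<forall>(x, y)\<in>G'. y \<le> p x) \<and> G \<subset> G'"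
proof -
  obtain c where c: "\<And>x y t. (x, y) \<in> G \<Longrightarrow> y + t * c \<le> p (x + t *\<^sub>R z)"
    using sublinear_extension_step[OF sub hom G dom] by metis
  define G' where "G' = span (insert (z, c) G)"
  have "G \<subseteq> G'" and "(z, c) \<in> G'"
    unfolding G'_def by (auto intro: span_base)
  moreover have "b \<le> p a" if ab: "(a, b) \<in> G'" for a b
  proof -
    obtain t where "(a - t *\<^sub>R z, b - t * c) \<in> G"
      using ab unfolding G'_def span_breakdown_eq span_eq_iff[THEN iffD2, OF G] by auto
    then show ?thesis
      using c[of "a - t *\<^sub>R z" "b - t * c" t] by simp
  qed
  ultimately have "subspace G' \<and> (\<forall>(x, y)\<in>G'. y \<le> p x) \<and> G \<subset> G'"
    using z by (auto simp: G'_def)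
  then show ?thesis ..
qed

lemma subspace_Union_chain:
  assumes "C \<noteq> {}" and chain: "subset.chain {G. subspace G} C"
  shows "subspace (\<Union>C)"
proof -
  have subspaces: "\<And>G. G \<in> C \<Longrightarrow> subspace G"
    using chain unfolding subset.chain_def by blast
  have "x + y \<in> \<Union>C" if xy: "x \<in> \<Union>C" "y \<in> \<Union>C" for x y
  proof -
    obtain G H where GH: "G \<in> C" "H \<in> C" "x \<in> G" "y \<in> H"
      using xy by blast
    with chain have "G \<subseteq> H \<or> H \<subseteq> G"
      unfolding subset.chain_def by blast
    then have "x + y \<in> G \<or> x + y \<in> H"
      using subspace_add subspaces GH by (metis subsetD)
    then show ?thesis
      using GH by blast
  qed
  moreover have "c *\<^sub>R x \<in> \<Union>C" if "x \<in> \<Union>C" for c x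
    using that subspace_scale subspaces by blast
  moreover have "0 \<in> \<Union>C"
    using assms(1) subspace_0 subspaces by blast
  ultimately show ?thesis
    unfolding subspace_def by blast
qed

theorem hahn_banach_sublinear:
  fixes p :: "'a::real_vector \<Rightarrow> real"
  assumes sub: "\<And>x y. p (x + y) \<le> p x + p y"
    and hom: "\<And>c x. c > 0 \<Longrightarrow> p (c *\<^sub>R x) = c * p x"
  obtains f where "linear f" and "\<And>x. f x \<le> p x"
proof -
  \<comment> \<open>Partial linear functionals below \<open>p\<close> are represented by their graphs; a dominated
    subspace is automatically a graph by \<open>dominated_subspace_single_valued\<close>.\<close>
  define \<A> where "\<A> = {G. subspace G \<and> (\<forall>(x, y)\<in>G. y \<le> p x)}"
  have p0: "p 0 = 0"
    using sublinear_zero[OF hom] .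
  have "{0} \<in> \<A>"
    using p0 by (simp add: \<A>_def) (simp add: zero_prod_def)
  moreover have "\<Union>C \<in> \<A>" if "C \<noteq> {}" "subset.chain \<A> C" for C
  proof -
    have "subset.chain {G. subspace G} C"
      using that(2) by (auto simp: subset.chain_def \<A>_def)
    then have "subspace (\<Union>C)"
      using subspace_Union_chain[OF that(1)] by blast
    moreover have "\<forall>(x, y)\<in>\<Union>C. y \<le> p x"
      using that(2) by (fastforce simp: subset.chain_def \<A>_def)
    ultimately show ?thesis
      by (simp add: \<A>_def)
  qed
  ultimately obtain M where "M \<in> \<A>" and max: "\<And>G. G \<in> \<A> \<Longrightarrow> M \<subseteq> G \<Longrightarrow> G = M"
    using subset_Zorn_nonempty[of \<A>] by (metis empty_iff)
  then have M: "subspace M" and dom: "\<forall>(x, y)\<in>M. y \<le> p x"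
    by (simp_all add: \<A>_def)
  have total: "\<exists>y. (x, y) \<in> M" for x
  proof (rule ccontr)
    assume "\<nexists>y. (x, y) \<in> M"
    then obtain G where "G \<in> \<A>" and "M \<subset> G"
      using dominated_subspace_extend[OF sub hom M dom, of x] unfolding \<A>_def by auto
    then show False
      using max by blast
  qed
  define f where "f x = (THE y. (x, y) \<in> M)" for x
  have f_eq: "f x = y" if "(x, y) \<in> M" for x y
    unfolding f_def using that dominated_subspace_single_valued[OF p0 M dom]
    by (intro the_equality)
  have graph: "(x, f x) \<in> M" for x
    using total f_eq by blast
  show ?thesis
  proof
    show "linear f"
    proof
      show "f (a + b) = f a + f b" for a b
        using subspace_add[OF M graph graph] by (intro f_eq) simp
      show "f (r *\<^sub>R a) = r *\<^sub>R f a" for r a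
        using subspace_scale[OF M graph] by (intro f_eq) simp
    qed
    show "f x \<le> p x" for x
      using dom graph by blast
  qed
qed

text \<open>A sublinear functional below the norm with value at most \<open>-\<eta>\<close> at \<open>-d\<close> for
  \<open>d \<in> D\<close>: any linear functional below it is bounded and at least \<open>\<eta>\<close> on \<open>D\<close>.\<close>
definition separating_gauge :: "'a::real_normed_vector set \<Rightarrow> real \<Rightarrow> 'a \<Rightarrow> real" where
  "separating_gauge D \<eta> x = Inf {norm (x + s *\<^sub>R d) - s * \<eta> | s d. 0 \<le> s \<and> d \<in> D}"

context
  fixes D :: "'a::real_normed_vector set" and \<eta> :: real
  assumes D_ne: "D \<noteq> {}" and far: "\<forall>d\<in>D. \<eta> \<le> norm d"
begin

lemma separating_gauge_le:
  assumes "0 \<le> s" and "d \<in> D"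
  shows "separating_gauge D \<eta> x \<le> norm (x + s *\<^sub>R d) - s * \<eta>"
proof -
  have "- norm x \<le> norm (x + s *\<^sub>R d) - s * \<eta>" if "0 \<le> s" "d \<in> D" for s d
  proof -
    have "s * \<eta> \<le> norm (s *\<^sub>R d)"
      using far that by (simp add: mult_left_mono)
    also have "\<dots> \<le> norm (x + s *\<^sub>R d) + norm x"
      using norm_triangle_ineq4[of "x + s *\<^sub>R d" x] by simp
    finally show ?thesis by simp
  qed
  then have "bdd_below {norm (x + s *\<^sub>R d) - s * \<eta> | s d. 0 \<le> s \<and> d \<in> D}"
    unfolding bdd_below_def by blast
  then show ?thesis
    unfolding separating_gauge_def using assms by (intro cInf_lower) auto
qed

lemma separating_gauge_greatest:
  assumes "\<And>s d. 0 \<le> s \<Longrightarrow> d \<in> D \<Longrightarrow> v \<le> norm (x + s *\<^sub>R d) - s * \<eta>"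
  shows "v \<le> separating_gauge D \<eta> x"
proof -
  have "{norm (x + s *\<^sub>R d) - s * \<eta> | s d. 0 \<le> s \<and> d \<in> D} \<noteq> {}"
    using D_ne by blast
  then show ?thesis
    unfolding separating_gauge_def using assms by (intro cInf_greatest) auto
qed

lemma separating_gauge_le_norm: "separating_gauge D \<eta> x \<le> norm x"
  using D_ne separating_gauge_le[of 0] by fastforce

lemma separating_gauge_scaleR_le:
  assumes "c > 0"
  shows "separating_gauge D \<eta> (c *\<^sub>R x) \<le> c * separating_gauge D \<eta> x"
proof -
  have "separating_gauge D \<eta> (c *\<^sub>R x) / c \<le> separating_gauge D \<eta> x"
  proof (rule separating_gauge_greatest)
    fix s :: real and d assume "0 \<le> s" "d \<in> D"
    then have "separating_gauge D \<eta> (c *\<^sub>R x) \<le> norm (c *\<^sub>R x + (c * s) *\<^sub>R d) - (c * s) * \<eta>"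
      using assms by (intro separating_gauge_le) auto
    also have "\<dots> = c * (norm (x + s *\<^sub>R d) - s * \<eta>)"
      using norm_scaleR[of c "x + s *\<^sub>R d"] assms by (simp add: scaleR_add_right algebra_simps)
    finally show "separating_gauge D \<eta> (c *\<^sub>R x) / c \<le> norm (x + s *\<^sub>R d) - s * \<eta>"
      using assms by (simp add: field_simps)
  qed
  then show ?thesis
    using assms by (simp add: field_simps)
qed

lemma separating_gauge_scaleR:
  assumes "c > 0"
  shows "separating_gauge D \<eta> (c *\<^sub>R x) = c * separating_gauge D \<eta> x"
proof -
  have "separating_gauge D \<eta> x \<le> inverse c * separating_gauge D \<eta> (c *\<^sub>R x)"
    using separating_gauge_scaleR_le[of "inverse c" "c *\<^sub>R x"] assms by simp
  then show ?thesis
    using separating_gauge_scaleR_le[OF assms, of x] assms by (simp add: field_simps)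
qed

lemma separating_gauge_add:
  assumes "convex D"
  shows "separating_gauge D \<eta> (x + y) \<le> separating_gauge D \<eta> x + separating_gauge D \<eta> y"
proof -
  have split: "separating_gauge D \<eta> (x + y)
      \<le> (norm (x + s1 *\<^sub>R d1) - s1 * \<eta>) + (norm (y + s2 *\<^sub>R d2) - s2 * \<eta>)"
    if "0 \<le> s1" "d1 \<in> D" "0 \<le> s2" "d2 \<in> D" for s1 d1 s2 d2
  proof (cases "s1 + s2 = 0")
    case True
    then have "s1 = 0" "s2 = 0"
      using that by simp_all
    then show ?thesis
      using separating_gauge_le_norm[of "x + y"] norm_triangle_ineq[of x y] by simp
  next
    case False
    then have s: "s1 + s2 > 0"
      using that by simp
    define d where "d = (s1 / (s1 + s2)) *\<^sub>R d1 + (s2 / (s1 + s2)) *\<^sub>R d2"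
    have "d \<in> D"
      unfolding d_def using convexD[OF assms that(2,4)] that s by (simp add: add_divide_distrib[symmetric])
    then have "separating_gauge D \<eta> (x + y) \<le> norm (x + y + (s1 + s2) *\<^sub>R d) - (s1 + s2) * \<eta>"
      using separating_gauge_le s by simp
    also have "(s1 + s2) *\<^sub>R d = s1 *\<^sub>R d1 + s2 *\<^sub>R d2"
      unfolding d_def using s by (simp add: scaleR_add_right)
    also have "x + y + (s1 *\<^sub>R d1 + s2 *\<^sub>R d2) = (x + s1 *\<^sub>R d1) + (y + s2 *\<^sub>R d2)"
      by (simp add: algebra_simps)
    finally show ?thesis
      using norm_triangle_ineq[of "x + s1 *\<^sub>R d1" "y + s2 *\<^sub>R d2"] by (simp add: algebra_simps)
  qed
  have "separating_gauge D \<eta> (x + y) - separating_gauge D \<eta> y \<le> separating_gauge D \<eta> x"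
  proof (rule separating_gauge_greatest)
    fix s1 :: real and d1 assume sd1: "0 \<le> s1" "d1 \<in> D"
    have "separating_gauge D \<eta> (x + y) - (norm (x + s1 *\<^sub>R d1) - s1 * \<eta>) \<le> separating_gauge D \<eta> y"
    proof (rule separating_gauge_greatest)
      fix s2 :: real and d2 assume "0 \<le> s2" "d2 \<in> D"
      then show "separating_gauge D \<eta> (x + y) - (norm (x + s1 *\<^sub>R d1) - s1 * \<eta>)
          \<le> norm (y + s2 *\<^sub>R d2) - s2 * \<eta>"
        using split[OF sd1 \<open>0 \<le> s2\<close> \<open>d2 \<in> D\<close>] by simp
    qed
    then show "separating_gauge D \<eta> (x + y) - separating_gauge D \<eta> y \<le> norm (x + s1 *\<^sub>R d1) - s1 * \<eta>"
      by simp
  qed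
  then show ?thesis by simp
qed

end

lemma convex_separation_from_0:
  fixes D :: "'a::real_normed_vector set"
  assumes "convex D" and "D \<noteq> {}" and "\<forall>d\<in>D. \<eta> \<le> norm d"
  obtains f where "bounded_linear f" and "\<And>d. d \<in> D \<Longrightarrow> \<eta> \<le> f d"
proof -
  let ?p = "separating_gauge D \<eta>"
  obtain f where f: "linear f" and below: "\<And>x. f x \<le> ?p x"
    using hahn_banach_sublinear[of ?p] separating_gauge_add[OF assms(2,3,1)]
      separating_gauge_scaleR[OF assms(2,3)] by blast
  have "\<bar>f x\<bar> \<le> norm x" for x
    using below[of x] below[of "- x"] separating_gauge_le_norm[OF assms(2,3), of x]
      separating_gauge_le_norm[OF assms(2,3), of "- x"] linear_neg[OF f] by simp
  then have "bounded_linear f"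
    using f by (intro bounded_linear_intro[where K = 1]) (auto simp: linear_add linear_scale)
  moreover have "\<eta> \<le> f d" if "d \<in> D" for d
    using below[of "- d"] separating_gauge_le[OF assms(2,3) zero_le_one that, of "- d"]
      linear_neg[OF f] by simp
  ultimately show ?thesis
    using that by blast
qed

lemma weak_tendsto_in_closure_convex_hull:
  fixes x :: "'b \<Rightarrow> 'a::real_normed_vector"
  assumes lim: "weak_tendsto x l F" and "F \<noteq> bot" and ev: "eventually (\<lambda>t. x t \<in> A) F"
  shows "l \<in> closure (convex hull A)"
proof (rule ccontr)
  assume "l \<notin> closure (convex hull A)"
  then obtain e where "e > 0" and far: "\<forall>y\<in>convex hull A. e \<le> norm (y - l)"
    unfolding closure_approachable dist_norm by (auto simp: not_less)
  have "A \<noteq> {}"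
    using eventually_happens'[OF \<open>F \<noteq> bot\<close> ev] by blast
  then obtain f where f: "bounded_linear f" and sep: "\<And>d. d \<in> (\<lambda>y. y - l) ` (convex hull A) \<Longrightarrow> e \<le> f d"
    using convex_separation_from_0[of "(\<lambda>y. y - l) ` (convex hull A)" e] far
    by (auto simp: convex_translation_subtract)
  have ge: "f l + e \<le> f y" if "y \<in> A" for y
    using sep[OF imageI[OF hull_inc[OF that]]] linear_diff[OF bounded_linear.linear[OF f]] by simp
  have "((\<lambda>t. f (x t)) \<longlongrightarrow> f l) F"
    using lim f unfolding weak_tendsto_def by blast
  then have "eventually (\<lambda>t. f (x t) < f l + e) F"
    using \<open>e > 0\<close> by (intro order_tendstoD) auto
  then have "eventually (\<lambda>t. False) F"
    using ev by eventually_elim (use ge in force)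
  then show False
    using \<open>F \<noteq> bot\<close> by simp
qed

lemma convex_hull_image_tail:
  fixes f :: "'a::linorder \<Rightarrow> 'b::real_vector"
  assumes "y \<in> convex hull (f ` {a<..})"
  obtains m where "m > a" and "y \<in> convex hull (f ` {m..})"
proof -
  obtain S u where "finite S" "S \<subseteq> f ` {a<..}" "\<forall>v\<in>S. 0 \<le> u v" "sum u S = 1"
    "(\<Sum>v\<in>S. u v *\<^sub>R v) = y"
    using assms unfolding convex_hull_explicit by blast
  moreover from this have "y \<in> convex hull S"
    unfolding convex_hull_explicit by blast
  ultimately obtain T where T: "finite T" "T \<subseteq> {a<..}" "S = f ` T"
    by (meson finite_subset_image)
  then have "T \<noteq> {}"
    using \<open>y \<in> convex hull S\<close> by auto
  then have "Min T > a" and "S \<subseteq> f ` {Min T..}"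
    using T by auto
  then show ?thesis
    using that hull_mono \<open>y \<in> convex hull S\<close> by blast
qed

lemma convex_hull_diff_mem:
  assumes "convex K" and "\<And>v. v \<in> A \<Longrightarrow> v - a \<in> K" and "y \<in> convex hull A"
  shows "y - a \<in> K"
proof -
  have "v \<in> (+) a ` K" if "v \<in> A" for v
    using assms(2)[OF that] by (intro rev_image_eqI[of "v - a"]) auto
  then have "convex hull A \<subseteq> (+) a ` K"
    using assms(1) by (intro hull_minimal) (auto simp: convex_translation)
  then show ?thesis
    using assms(3) by auto
qed

lemma weak_tendsto_at_right_convex_tail:
  fixes \<Phi> :: "real \<Rightarrow> 'a::real_normed_vector"
  assumes "weak_tendsto \<Phi> l (at_right a)" and "e > 0"
  obtains m y where "m > a" and "y \<in> convex hull (\<Phi> ` {m..})" and "norm (y - l) < e"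
proof -
  have "l \<in> closure (convex hull (\<Phi> ` {a<..}))"
    using assms(1) by (rule weak_tendsto_in_closure_convex_hull)
      (auto intro: eventually_mono[OF eventually_at_right_less])
  then obtain y where "y \<in> convex hull (\<Phi> ` {a<..})" and "norm (y - l) < e"
    using assms(2) unfolding closure_approachable dist_norm by blast
  then show ?thesis
    using convex_hull_image_tail that by metis
qed

lemma normal_cone_norm_le_convex_hull:
  assumes "convex K" and "c \<ge> 0"
    and normal: "\<And>x y. x - 0 \<in> K \<Longrightarrow> y - x \<in> K \<Longrightarrow> norm x \<le> c * norm y"
    and "x \<in> K" and le: "\<And>v. v \<in> A \<Longrightarrow> v - x + w \<in> K" and "y \<in> convex hull A"
  shows "norm x \<le> c * (norm y + norm w)"
proof -
  have "y - (x - w) \<in> K"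
    using le by (intro convex_hull_diff_mem[OF assms(1) _ assms(6)]) (simp add: algebra_simps)
  then have "norm x \<le> c * norm (y + w)"
    using normal \<open>x \<in> K\<close> by (simp add: algebra_simps)
  also have "\<dots> \<le> c * (norm y + norm w)"
    using \<open>c \<ge> 0\<close> norm_triangle_ineq by (intro mult_left_mono)
  finally show ?thesis .
qed

theorem lemma4p1:
  fixes K :: "'a::banach set" and \<alpha> :: "real \<Rightarrow> real" and k0 :: 'a and \<Phi> :: "real \<Rightarrow> 'a"
  assumes "closed K" and "convex K" and "cone K" and "normal_cone K"
    and "\<forall>t\<ge>0. \<alpha> t \<ge> 0" and "mono_on {0..} \<alpha>"
    and "((\<lambda>t. \<alpha> t / t) \<longlongrightarrow> 0) (at_right 0)"
    and "k0 \<in> K"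
    and "\<forall>t>0. \<Phi> t \<in> K"
    and "\<forall>t1 t. 0 < t1 \<and> t1 < t \<longrightarrow> \<Phi> t - \<Phi> t1 + (\<alpha> t1 / t1) *\<^sub>R k0 \<in> K"
    and "weak_tendsto \<Phi> 0 (at_right 0)"
  shows "((\<lambda>t. norm (\<Phi> t)) \<longlongrightarrow> 0) (at_right 0)"
proof (rule tendstoI)
  fix e :: real assume "e > 0"
  obtain c where "c > 0" and normal: "\<And>x y. x - 0 \<in> K \<Longrightarrow> y - x \<in> K \<Longrightarrow> norm x \<le> c * norm y"
    using assms(4) unfolding normal_cone_def by blast
  define \<eta> where "\<eta> = e / (2 * c)"
  have "\<eta> > 0"
    using \<open>e > 0\<close> \<open>c > 0\<close> by (simp add: \<eta>_def)
  obtain m y where "m > 0" and y: "y \<in> convex hull (\<Phi> ` {m..})" and "norm y < \<eta>"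
    using weak_tendsto_at_right_convex_tail[OF assms(11) \<open>\<eta> > 0\<close>] by auto
  have "((\<lambda>s. norm ((\<alpha> s / s) *\<^sub>R k0)) \<longlongrightarrow> 0) (at_right 0)"
    using tendsto_scaleR[OF assms(7) tendsto_const[of k0]] by (intro tendsto_norm_zero) simp
  then have "eventually (\<lambda>s. norm ((\<alpha> s / s) *\<^sub>R k0) < \<eta>) (at_right 0)"
    using \<open>\<eta> > 0\<close> by (intro order_tendstoD) auto
  moreover have "eventually (\<lambda>s. s \<in> {0<..<m}) (at_right 0)"
    using \<open>m > 0\<close> by (intro eventually_at_rightI) auto
  ultimately show "eventually (\<lambda>s. dist (norm (\<Phi> s)) 0 < e) (at_right 0)"
  proof eventually_elim
    case (elim s)
    have "norm (\<Phi> s) \<le> c * (norm y + norm ((\<alpha> s / s) *\<^sub>R k0))"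
      using elim assms(9,10) \<open>c > 0\<close> by (intro normal_cone_norm_le_convex_hull[OF assms(2) _ normal _ _ y]) auto
    also have "\<dots> < c * (\<eta> + \<eta>)"
      using \<open>c > 0\<close> \<open>norm y < \<eta>\<close> elim by (intro mult_strict_left_mono) auto
    also have "\<dots> = e"
      using \<open>c > 0\<close> by (simp add: \<eta>_def)
    finally show ?case
      by simp
  qed
qed

end
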